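(* For every $n\ge1$, $N\in\mathbb{N}$, $f\in\mathcal{E}_N$ and $a\ge\sqrt{n}\sqrt{2N+1}$, $$\int_{|x|\ge a}|f(x)|^2\,dx\le\frac{2^n n^{3/2}}{\sqrt{\pi}}\,\frac{e^{-\frac{a^2}{2n}}}{a}\,8^N\,\|f\|_{L^2(\mathbb{R}^n)}^2.$$
   Context: The one-dimensional Hermite functions are $\phi_k(x)=\frac{(-1)^k}{\sqrt{2^k k!\sqrt{\pi}}}e^{x^2/2}\frac{d^k}{dx^k}(e^{-x^2})$, $k\in\mathbb{N}$. For $\alpha\in\mathbb{N}^n$, $\Phi_\alpha(x)=\prod_{j=1}^n\phi_{\alpha_j}(x_j)$ and $|\alpha|=\alpha_1+\dots+\alpha_n$. $\mathcal{E}_N=\mathrm{Span}_{\mathbb{C}}\{\Phi_\alpha:|\alpha|\le N\}$. $|x|$ is the Euclidean norm. *)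

theory Defs
  imports "HOL-Analysis.Analysis"
begin

definition hermite_fun :: "nat \<Rightarrow> real \<Rightarrow> real" where
  "hermite_fun k x = (-1) ^ k / sqrt (2 ^ k * fact k * sqrt pi)
      * exp (x\<^sup>2 / 2) * (deriv ^^ k) (\<lambda>t. exp (- (t\<^sup>2))) x"

text \<open>Multi-dimensional Hermite functions on R^n (index type 'n, n = CARD('n)),
  multi-index alpha : 'n => nat.\<close>
definition hermite_multi :: "('n::finite \<Rightarrow> nat) \<Rightarrow> real ^ 'n \<Rightarrow> real" where
  "hermite_multi \<alpha> x = (\<Prod>j\<in>UNIV. hermite_fun (\<alpha> j) (x $ j))"

definition multi_indices_le :: "nat \<Rightarrow> ('n::finite \<Rightarrow> nat) set" where
  "multi_indices_le N = {\<alpha>. (\<Sum>j\<in>UNIV. \<alpha> j) \<le> N}"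

definition hermite_space :: "nat \<Rightarrow> (real ^ 'n::finite \<Rightarrow> complex) set" where
  "hermite_space N = {f. \<exists>c :: ('n \<Rightarrow> nat) \<Rightarrow> complex.
      f = (\<lambda>x. \<Sum>\<alpha>\<in>multi_indices_le N. c \<alpha> * complex_of_real (hermite_multi \<alpha> x))}"

end

theory Submission
  imports Defs "HOL-Probability.Distributions" "HOL-Computational_Algebra.Polynomial"
begin

text \<open>
  By Rodrigues' formula phi_k = c_k H_k(x) exp(-x^2/2), where the Hermite polynomials satisfy
  H_(k+1) = 2x H_k - H_k'. Integration by parts against exp(-x^2) gives orthonormality, so
  the squared norm of f = sum c_alpha Phi_alpha is sum |c_alpha|^2.

  For |t| >= b >= sqrt(2k+1) the three-term recurrence gives |H_k(t)| <= (5|t|/2)^k, and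
  t^(2k-1) exp(-t^2/2) is decreasing there, so phi_k^2 is dominated on the tail by a multiple of
  |t| exp(-t^2/2), whose tail integral is 2 exp(-b^2/2). If |x| >= a then |x_j| >= a / sqrt n for
  some j; Cauchy-Schwarz and the product structure of Phi_alpha reduce the n-dimensional tail to
  these one-dimensional ones, and summing 8^(alpha j) over |alpha| <= N gives the factor 2^n 8^N.
\<close>

fun hermite_poly :: "nat \<Rightarrow> real poly" where
  "hermite_poly 0 = 1"
| "hermite_poly (Suc k) = [:0, 2:] * hermite_poly k - pderiv (hermite_poly k)"

declare hermite_poly.simps(2) [simp del]

lemma higher_deriv_gaussian:
  "(deriv ^^ k) (\<lambda>t. exp (- (t\<^sup>2))) = (\<lambda>x. (-1) ^ k * poly (hermite_poly k) x * exp (- (x\<^sup>2)))"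
proof (induction k)
  case 0
  then show ?case by simp
next
  case (Suc k)
  have "((\<lambda>x. (-1) ^ k * poly (hermite_poly k) x * exp (- (x\<^sup>2))) has_real_derivative
      (-1) ^ Suc k * poly (hermite_poly (Suc k)) x * exp (- (x\<^sup>2))) (at x)" for x
    by (auto intro!: derivative_eq_intros poly_DERIV simp: hermite_poly.simps(2) algebra_simps power2_eq_square)
  then show ?case
    by (simp only: funpow.simps comp_def Suc.IH) (rule ext, rule DERIV_imp_deriv)
qed

definition hermite_norm_const :: "nat \<Rightarrow> real" where
  "hermite_norm_const k = 1 / sqrt (2 ^ k * fact k * sqrt pi)"

lemma hermite_norm_const_sq: "(hermite_norm_const k)\<^sup>2 = 1 / (2 ^ k * fact k * sqrt pi)"
  by (simp add: hermite_norm_const_def power_divide)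

lemma hermite_fun_eq_poly:
  "hermite_fun k x = hermite_norm_const k * poly (hermite_poly k) x * exp (- (x\<^sup>2) / 2)"
proof -
  have "exp (x\<^sup>2 / 2) * exp (- (x\<^sup>2)) = exp (- (x\<^sup>2) / 2)"
    by (simp add: exp_add[symmetric])
  moreover have "(-1::real) ^ k * (-1) ^ k = 1"
    by (simp add: power_mult_distrib[symmetric])
  ultimately show ?thesis
    unfolding hermite_fun_def higher_deriv_gaussian hermite_norm_const_def
    by (simp add: field_simps)
qed

lemma hermite_fun_mult_eq_poly:
  "hermite_fun j x * hermite_fun k x
     = hermite_norm_const j * hermite_norm_const k * (poly (hermite_poly j * hermite_poly k) x * exp (- (x\<^sup>2)))"
proof -
  have "exp (- (x\<^sup>2) / 2) * exp (- (x\<^sup>2) / 2) = exp (- (x\<^sup>2))"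
    by (simp add: exp_add[symmetric])
  then show ?thesis
    unfolding hermite_fun_eq_poly by (simp add: algebra_simps)
qed

definition gaussian_moment :: "nat \<Rightarrow> real" where
  "gaussian_moment m = (if even m then sqrt pi * fact m / (2 ^ m * fact (m div 2)) else 0)"

lemma has_bochner_integral_gaussian_moment:
  "has_bochner_integral lborel (\<lambda>x. exp (- (x\<^sup>2)) * x ^ m) (gaussian_moment m)"
proof (cases "even m")
  case True
  then obtain k where "m = 2 * k" by (auto elim: evenE)
  with has_bochner_integral_even_function[OF gaussian_moment_even_pos[of k]] show ?thesis
    by (simp add: gaussian_moment_def)
next
  case False
  then obtain k where "m = 2 * k + 1" by (auto elim: oddE)
  with has_bochner_integral_odd_function[OF gaussian_moment_odd_pos[of k]] show ?thesis
    by (simp add: gaussian_moment_def)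
qed

lemma gaussian_moment_Suc_Suc: "2 * gaussian_moment (Suc (Suc m)) = real (Suc m) * gaussian_moment m"
proof (cases "even m")
  case True
  then obtain k where "m = 2 * k" by (auto elim: evenE)
  then show ?thesis
    unfolding gaussian_moment_def by (simp add: field_simps del: fact_Suc) (simp add: field_simps)
qed (simp add: gaussian_moment_def)

definition gauss_integral :: "real poly \<Rightarrow> real" where
  "gauss_integral q = (\<integral>x. poly q x * exp (- (x\<^sup>2)) \<partial>lborel)"

lemma has_bochner_integral_monom_gaussian:
  "has_bochner_integral lborel (\<lambda>x. poly (monom c i) x * exp (- (x\<^sup>2))) (c * gaussian_moment i)"
  using has_bochner_integral_mult_right[OF has_bochner_integral_gaussian_moment, of c i]
  by (simp add: poly_monom mult_ac)

lemma gauss_integral_monom: "gauss_integral (monom c i) = c * gaussian_moment i"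
  unfolding gauss_integral_def
  using has_bochner_integral_monom_gaussian by (rule has_bochner_integral_integral_eq)

lemma integrable_poly_gaussian: "integrable lborel (\<lambda>x. poly q x * exp (- (x\<^sup>2)))"
  for q :: "real poly"
proof -
  have monoms: "(\<lambda>x. poly q x * exp (- (x\<^sup>2)))
      = (\<lambda>x. \<Sum>i\<le>degree q. poly (monom (coeff q i) i) x * exp (- (x\<^sup>2)))"
    by (subst (1) poly_as_sum_of_monoms[symmetric]) (simp add: poly_sum sum_distrib_right)
  show ?thesis
    unfolding monoms
    using has_bochner_integral_monom_gaussian by (intro Bochner_Integration.integrable_sum integrable.intros)
qed

lemma gauss_integral_add: "gauss_integral (p + q) = gauss_integral p + gauss_integral q"
  unfolding gauss_integral_def by (simp add: distrib_right integrable_poly_gaussian)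

lemma gauss_integral_diff: "gauss_integral (p - q) = gauss_integral p - gauss_integral q"
  unfolding gauss_integral_def by (simp add: left_diff_distrib integrable_poly_gaussian)

lemma gauss_integral_sum: "gauss_integral (\<Sum>i\<in>A. p i) = (\<Sum>i\<in>A. gauss_integral (p i))"
  by (induction A rule: infinite_finite_induct)
    (simp_all add: gauss_integral_add, simp_all add: gauss_integral_def)

lemma gauss_integral_const: "gauss_integral [:c:] = c * sqrt pi"
  using gauss_integral_monom[of c 0] by (simp add: gaussian_moment_def monom_0)

text \<open>Integration by parts: the derivative of q(x) exp(-x^2) has integral zero.\<close>
lemma gauss_integral_pderiv: "gauss_integral (pderiv q) = gauss_integral ([:0, 2:] * q)"
proof -
  have monom: "gauss_integral (pderiv (monom c i)) = gauss_integral ([:0, 2:] * monom c i)" for c i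
  proof -
    have "[:0, 2:] * monom c i = monom (2 * c) (Suc i)"
      by (simp add: monom_Suc mult.commute smult_monom)
    then have "gauss_integral ([:0, 2:] * monom c i) = 2 * c * gaussian_moment (Suc i)"
      by (simp add: gauss_integral_monom)
    moreover have "gauss_integral (pderiv (monom c i)) = of_nat i * c * gaussian_moment (i - 1)"
      by (simp add: pderiv_monom gauss_integral_monom)
    ultimately show ?thesis
      using gaussian_moment_Suc_Suc[of "i - 1"]
      by (cases i) (simp_all add: algebra_simps gaussian_moment_def)
  qed
  have pderiv_sum: "pderiv (\<Sum>i\<in>A. p i) = (\<Sum>i\<in>A. pderiv (p i))" for A and p :: "nat \<Rightarrow> real poly"
    using higher_pderiv_sum[of 1] by simp
  show ?thesis
    by (subst (1 2) poly_as_sum_of_monoms[symmetric])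
      (simp add: pderiv_sum gauss_integral_sum monom sum_distrib_left)
qed

lemma gauss_integral_mult_hermite_poly:
  "gauss_integral (q * hermite_poly k) = gauss_integral ((pderiv ^^ k) q)"
proof (induction k arbitrary: q)
  case 0
  then show ?case by simp
next
  case (Suc k)
  have "gauss_integral (q * hermite_poly (Suc k))
      = gauss_integral ([:0, 2:] * (q * hermite_poly k)) - gauss_integral (q * pderiv (hermite_poly k))"
    by (simp add: hermite_poly.simps(2) gauss_integral_diff[symmetric] algebra_simps)
  also have "\<dots> = gauss_integral (pderiv (q * hermite_poly k)) - gauss_integral (q * pderiv (hermite_poly k))"
    by (simp only: gauss_integral_pderiv)
  also have "\<dots> = gauss_integral (pderiv q * hermite_poly k)"
    by (simp add: pderiv_mult gauss_integral_add mult.commute)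
  also have "\<dots> = gauss_integral ((pderiv ^^ Suc k) q)"
    by (simp add: Suc.IH funpow_Suc_right del: funpow.simps)
  finally show ?case .
qed

lemma degree_hermite_poly: "degree (hermite_poly k) \<le> k"
  and coeff_hermite_poly: "coeff (hermite_poly k) k = 2 ^ k"
proof (induction k)
  case (Suc k)
  {
    case 1
    have "degree ([:0, 2:] * hermite_poly k) \<le> Suc k"
      using degree_mult_le[of "[:0, 2:]" "hermite_poly k"] Suc.IH(1) by simp
    moreover have "degree (pderiv (hermite_poly k)) \<le> Suc k"
      using Suc.IH(1) by (simp add: degree_pderiv)
    ultimately show ?case
      unfolding hermite_poly.simps by (rule degree_diff_le)
  next
    case 2
    show ?case
      using Suc.IH by (simp add: hermite_poly.simps(2) coeff_pderiv coeff_eq_0)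
  }
qed simp_all

lemma higher_pderiv_eq_const:
  fixes p :: "real poly"
  assumes "degree p \<le> k"
  shows "(pderiv ^^ k) p = [:fact k * coeff p k:]"
proof -
  have "degree ((pderiv ^^ k) p) = 0"
    using assms by (simp add: degree_higher_pderiv)
  then show ?thesis
    by (subst degree_0_id[symmetric]) (simp_all add: coeff_higher_pderiv pochhammer_fact)
qed

lemma gauss_integral_hermite_poly_mult:
  "gauss_integral (hermite_poly j * hermite_poly k) = (if j = k then 2 ^ k * fact k * sqrt pi else 0)"
proof -
  have le: "gauss_integral (hermite_poly j * hermite_poly k) = (if j = k then 2 ^ k * fact k * sqrt pi else 0)"
    if "j \<le> k" for j k
  proof -
    have "coeff (hermite_poly j) k = (if j = k then 2 ^ k else 0)"
      using that degree_hermite_poly[of j] coeff_hermite_poly[of k] by (auto intro: coeff_eq_0)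
    then show ?thesis
      using that degree_hermite_poly[of j]
      by (simp add: gauss_integral_mult_hermite_poly higher_pderiv_eq_const gauss_integral_const)
  qed
  show ?thesis
    using le[of j k] le[of k j] by (cases "j \<le> k") (auto simp: mult.commute)
qed

lemma integrable_hermite_fun_mult: "integrable lborel (\<lambda>x. hermite_fun j x * hermite_fun k x)"
  unfolding hermite_fun_mult_eq_poly by (intro integrable_mult_right integrable_poly_gaussian)

lemma integral_hermite_fun_mult:
  "(\<integral>x. hermite_fun j x * hermite_fun k x \<partial>lborel) = (if j = k then 1 else 0)"
  unfolding hermite_fun_mult_eq_poly integral_mult_right_zero gauss_integral_def[symmetric]
  by (simp add: gauss_integral_hermite_poly_mult hermite_norm_const_sq[unfolded power2_eq_square])

lemma pderiv_hermite_poly: "pderiv (hermite_poly (Suc k)) = smult (2 * real (Suc k)) (hermite_poly k)"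
proof (induction k)
  case 0
  then show ?case by (simp add: hermite_poly.simps(2) pderiv_pCons)
next
  case (Suc k)
  define H where "H = hermite_poly (Suc k)"
  have "pderiv (hermite_poly (Suc (Suc k))) = [:0, 2:] * pderiv H + smult 2 H - pderiv (pderiv H)"
    by (simp only: H_def hermite_poly.simps(2)[of "Suc k"]) (simp add: pderiv_diff pderiv_mult pderiv_pCons pderiv_smult)
  also have "\<dots> = smult (2 * real (Suc k)) ([:0, 2:] * hermite_poly k - pderiv (hermite_poly k)) + smult 2 H"
    by (simp add: H_def Suc.IH pderiv_smult algebra_simps smult_diff_right)
  also have "\<dots> = smult (2 * real (Suc (Suc k))) H"
    by (simp add: H_def hermite_poly.simps(2) smult_add_left[symmetric])
  finally show ?case
    by (simp add: H_def)
qed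

lemma poly_hermite_poly_Suc_Suc:
  "poly (hermite_poly (Suc (Suc k))) x
     = 2 * x * poly (hermite_poly (Suc k)) x - 2 * real (Suc k) * poly (hermite_poly k) x"
  by (simp only: hermite_poly.simps(2)[of "Suc k"] pderiv_hermite_poly) (simp add: algebra_simps)

lemma abs_poly_hermite_poly_le:
  assumes "2 * real k \<le> t\<^sup>2"
  shows "\<bar>poly (hermite_poly k) t\<bar> \<le> (5/2 * \<bar>t\<bar>) ^ k"
  using assms
proof (induction k rule: less_induct)
  case (less k)
  consider "k = 0" | "k = 1" | j where "k = Suc (Suc j)"
    by (metis One_nat_def not0_implies_Suc)
  then show ?case
  proof cases
    case 3
    define A where "A = 5/2 * \<bar>t\<bar>"
    have A: "0 \<le> A" "A\<^sup>2 = 25/4 * t\<^sup>2"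
      unfolding A_def by (simp, simp only: power_mult_distrib power2_abs, simp add: power2_eq_square)
    have IH: "\<bar>poly (hermite_poly (Suc j)) t\<bar> \<le> A ^ Suc j" "\<bar>poly (hermite_poly j) t\<bar> \<le> A ^ j"
      using less.IH[of "Suc j"] less.IH[of j] less.prems by (simp_all add: 3 A_def)
    have "\<bar>poly (hermite_poly k) t\<bar>
        \<le> 2 * \<bar>t\<bar> * \<bar>poly (hermite_poly (Suc j)) t\<bar> + 2 * real (Suc j) * \<bar>poly (hermite_poly j) t\<bar>"
      using abs_triangle_ineq4[of "2 * t * poly (hermite_poly (Suc j)) t" "2 * real (Suc j) * poly (hermite_poly j) t"]
      by (simp add: 3 poly_hermite_poly_Suc_Suc abs_mult)
    also have "\<dots> \<le> 2 * \<bar>t\<bar> * A ^ Suc j + 2 * real (Suc j) * A ^ j"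
      using IH by (intro add_mono mult_left_mono) auto
    also have "\<dots> = (2 * \<bar>t\<bar> * A + 2 * real (Suc j)) * A ^ j"
      by (simp add: algebra_simps)
    also have "\<dots> \<le> A\<^sup>2 * A ^ j"
      \<comment> \<open>since 2 (j + 1) <= 5/4 t^2 whenever 2 (j + 2) <= t^2\<close>
      using less.prems A 3 by (intro mult_right_mono) (auto simp: A_def power2_eq_square)
    finally show ?thesis
      by (simp add: 3 A_def power2_eq_square mult_ac)
  qed (simp_all add: hermite_poly.simps(2) abs_mult)
qed

lemma has_bochner_integral_gaussian_tail_half:
  fixes b :: real
  assumes "0 \<le> b"
  shows "has_bochner_integral lborel (\<lambda>x. indicator {b..} x * (x * exp (- (x\<^sup>2) / 2))) (exp (- (b\<^sup>2) / 2))"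
proof (rule has_bochner_integral_nn_integral)
  show "AE x in lborel. 0 \<le> indicator {b..} x * (x * exp (- (x\<^sup>2) / 2))"
    using assms by (intro AE_I2) (simp split: split_indicator)
  have "LIM x at_top. (1/2) * (x::real)\<^sup>2 :> at_top"
    by (intro filterlim_tendsto_pos_mult_at_top[OF tendsto_const] filterlim_pow_at_top filterlim_ident) auto
  then have "LIM x at_top. (x::real)\<^sup>2 / 2 :> at_top"
    by (simp add: field_simps)
  then have "((\<lambda>x::real. exp (- ((x\<^sup>2) / 2))) \<longlongrightarrow> 0) at_top"
    by (rule filterlim_compose[OF exp_at_bot filterlim_compose[OF filterlim_uminus_at_bot_at_top]])
  then have lim: "((\<lambda>x::real. - exp (- (x\<^sup>2) / 2)) \<longlongrightarrow> 0) at_top"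
    using tendsto_minus by fastforce
  have "(\<integral>\<^sup>+x. ennreal (indicator {b..} x * (x * exp (- (x\<^sup>2) / 2))) \<partial>lborel)
      = (\<integral>\<^sup>+x. ennreal (x * exp (- (x\<^sup>2) / 2)) * indicator {b..} x \<partial>lborel)"
    by (intro nn_integral_cong) (simp split: split_indicator)
  also have "\<dots> = ennreal (0 - (- exp (- (b\<^sup>2) / 2)))"
    using assms lim
    by (intro nn_integral_FTC_atLeast) (auto intro!: derivative_eq_intros simp: algebra_simps)
  finally show "(\<integral>\<^sup>+x. ennreal (indicator {b..} x * (x * exp (- (x\<^sup>2) / 2))) \<partial>lborel)
      = ennreal (exp (- (b\<^sup>2) / 2))"
    by simp
qed simp_all

lemma has_bochner_integral_gaussian_tail:
  fixes b :: real
  assumes "0 \<le> b"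
  shows "has_bochner_integral lborel (\<lambda>t. indicator {t. b \<le> \<bar>t\<bar>} t * (\<bar>t\<bar> * exp (- (t\<^sup>2) / 2)))
    (2 * exp (- (b\<^sup>2) / 2))"
proof -
  have "has_bochner_integral lborel
      (\<lambda>x. indicator {0..} x *\<^sub>R (indicator {t. b \<le> \<bar>t\<bar>} x * (\<bar>x\<bar> * exp (- (x\<^sup>2) / 2))))
      (exp (- (b\<^sup>2) / 2))"
    using has_bochner_integral_gaussian_tail_half[OF assms]
    by (rule has_bochner_integral_cong[THEN iffD1, rotated 3]) (use assms in \<open>auto split: split_indicator\<close>)
  from has_bochner_integral_even_function[OF this] show ?thesis
    by (simp add: indicator_def)
qed

lemma power_mult_gaussian_antimono:
  fixes b s :: real
  assumes "0 < b" "b \<le> s" "real m \<le> b\<^sup>2"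
  shows "s ^ m * exp (- (s\<^sup>2) / 2) \<le> b ^ m * exp (- (b\<^sup>2) / 2)"
proof -
  define r where "r = s / b"
  have r: "1 \<le> r" "s = b * r"
    using assms by (simp_all add: r_def)
  have "real m * (r - 1) \<le> b\<^sup>2 * (r - 1)"
    using assms(3) r by (intro mult_right_mono) auto
  also have "\<dots> \<le> b\<^sup>2 * (r - 1) * ((r + 1) / 2)"
    using r mult_left_mono[of 1 "(r + 1) / 2" "b\<^sup>2 * (r - 1)"] by simp
  also have "\<dots> = (s\<^sup>2 - b\<^sup>2) / 2"
    by (simp add: r power2_eq_square field_simps)
  finally have exponent: "real m * (r - 1) \<le> (s\<^sup>2 - b\<^sup>2) / 2" .
  have "r ^ m \<le> exp (r - 1) ^ m"
    using r exp_ge_add_one_self[of "r - 1"] by (intro power_mono) auto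
  also have "\<dots> \<le> exp ((s\<^sup>2 - b\<^sup>2) / 2)"
    using exponent by (simp add: exp_of_nat_mult[symmetric])
  finally have "b ^ m * r ^ m * exp (- (s\<^sup>2) / 2) \<le> b ^ m * exp ((s\<^sup>2 - b\<^sup>2) / 2) * exp (- (s\<^sup>2) / 2)"
    using assms(1) by (intro mult_right_mono mult_left_mono) auto
  then show ?thesis
    by (simp add: r power_mult_distrib mult.assoc exp_add[symmetric] diff_divide_distrib)
qed

lemma even_power_mult_gaussian_antimono:
  fixes b s :: real
  assumes "0 < b" "b \<le> s" "2 * real k \<le> b\<^sup>2 + 1"
  shows "s ^ (2 * k) * exp (- (s\<^sup>2) / 2) / s \<le> b ^ (2 * k) * exp (- (b\<^sup>2) / 2) / b"
proof (cases k)
  case 0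
  have "exp (- (s\<^sup>2) / 2) \<le> exp (- (b\<^sup>2) / 2)"
    using assms by (simp add: power_mono)
  then show ?thesis
    using 0 assms by (simp add: frac_le)
next
  case (Suc j)
  then have "s ^ (2 * j + 1) * exp (- (s\<^sup>2) / 2) \<le> b ^ (2 * j + 1) * exp (- (b\<^sup>2) / 2)"
    using assms by (intro power_mult_gaussian_antimono) auto
  then show ?thesis
    using Suc assms by (simp add: field_simps)
qed

lemma power_self_le_exp_fact: "real (Suc m) ^ Suc m \<le> exp (real m) * fact (Suc m)"
proof (induction m)
  case 0
  then show ?case by simp
next
  case (Suc m)
  define a where "a = real (Suc m)"
  have a: "0 < a" "real (Suc (Suc m)) = a * (1 + 1 / a)"
    by (simp_all add: a_def field_simps)
  have "(1 + 1 / a) ^ Suc m \<le> exp (1 / a) ^ Suc m"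
    using a exp_ge_add_one_self[of "1 / a"] by (intro power_mono) auto
  also have "\<dots> = exp (real (Suc m) * (1 / a))"
    by (simp only: exp_of_nat_mult)
  also have "\<dots> = exp 1"
    using a by (simp add: a_def)
  finally have "real (Suc (Suc m)) ^ Suc m \<le> a ^ Suc m * exp 1"
    using a by (simp add: power_mult_distrib mult_left_mono)
  also have "\<dots> \<le> exp (real m) * fact (Suc m) * exp 1"
    using Suc.IH by (simp add: a_def)
  finally have "real (Suc (Suc m)) * real (Suc (Suc m)) ^ Suc m
      \<le> real (Suc (Suc m)) * (exp (real m) * fact (Suc m) * exp 1)"
    by (intro mult_left_mono) auto
  then show ?case
    by (simp add: exp_add[symmetric] algebra_simps)
qed

lemma even_power_mult_gaussian_le_fact:
  fixes b :: real
  assumes "1 \<le> b"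
  shows "b ^ (2 * k) * exp (- (b\<^sup>2) / 2) \<le> 3/4 * 2 ^ k * fact k"
proof (cases k)
  case 0
  have "exp (- (b\<^sup>2) / 2) \<le> exp (- 1 / 2)"
    using assms by (simp add: power_mono)
  also have "\<dots> \<le> 3/4"
    using exp_ge_add_one_self[of "1/2"] by (simp add: exp_minus field_simps)
  finally show ?thesis
    using 0 by simp
next
  case (Suc m)
  define y where "y = b\<^sup>2 / (2 * real k)"
  have b_pow: "b ^ (2 * k) = (2 * real k) ^ k * y ^ k"
    using Suc by (simp only: power_mult power_mult_distrib[symmetric]) (simp add: y_def)
  have "y ^ k \<le> exp (y - 1) ^ k"
    using exp_ge_add_one_self[of "y - 1"] by (intro power_mono) (auto simp: y_def)
  also have "\<dots> = exp (real k * (y - 1))"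
    by (simp only: exp_of_nat_mult)
  also have "real k * (y - 1) = b\<^sup>2 / 2 - real k"
    using Suc by (simp add: y_def field_simps)
  finally have "b ^ (2 * k) * exp (- (b\<^sup>2) / 2)
      \<le> (2 * real k) ^ k * exp (b\<^sup>2 / 2 - real k) * exp (- (b\<^sup>2) / 2)"
    unfolding b_pow by (intro mult_right_mono mult_left_mono) auto
  also have "\<dots> = 2 ^ k * (real k ^ k * exp (- real k))"
    by (simp add: power_mult_distrib exp_add[symmetric])
  also have "\<dots> \<le> 2 ^ k * (exp (real m) * fact k * exp (- real k))"
    using power_self_le_exp_fact[of m] Suc by (intro mult_left_mono mult_right_mono) auto
  also have "\<dots> = 2 ^ k * (fact k * exp (-1))"
    using Suc by (simp add: exp_add[symmetric])
  also have "\<dots> \<le> 3/4 * 2 ^ k * fact k"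
    using exp_ge_add_one_self[of 1] by (simp add: exp_minus field_simps)
  finally show ?thesis .
qed

lemma even_power_gaussian_le:
  fixes b t :: real
  assumes "1 \<le> b" "b \<le> \<bar>t\<bar>" "2 * real k + 1 \<le> b\<^sup>2"
  shows "\<bar>t\<bar> ^ (2 * k) * exp (- (t\<^sup>2)) \<le> 3/4 * 2 ^ k * fact k / b * (\<bar>t\<bar> * exp (- (t\<^sup>2) / 2))"
proof -
  have t: "0 < \<bar>t\<bar>"
    using assms by auto
  have "\<bar>t\<bar> ^ (2 * k) * exp (- (t\<^sup>2) / 2) / \<bar>t\<bar> \<le> b ^ (2 * k) * exp (- (b\<^sup>2) / 2) / b"
    using even_power_mult_gaussian_antimono[of b "\<bar>t\<bar>" k] assms by simp
  also have "\<dots> \<le> 3/4 * 2 ^ k * fact k / b"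
    using assms even_power_mult_gaussian_le_fact[of b k] by (intro divide_right_mono) auto
  finally have "\<bar>t\<bar> ^ (2 * k) * exp (- (t\<^sup>2) / 2) * exp (- (t\<^sup>2) / 2)
      \<le> 3/4 * 2 ^ k * fact k / b * \<bar>t\<bar> * exp (- (t\<^sup>2) / 2)"
    using t by (intro mult_right_mono) (simp_all add: pos_divide_le_eq)
  moreover have "exp (- (t\<^sup>2) / 2) * exp (- (t\<^sup>2) / 2) = exp (- (t\<^sup>2))"
    by (simp add: exp_add[symmetric])
  ultimately show ?thesis
    by (simp add: mult.assoc)
qed

lemma hermite_fun_sq_le:
  fixes b t :: real
  assumes "1 \<le> b" "b \<le> \<bar>t\<bar>" "2 * real k + 1 \<le> b\<^sup>2"
  shows "(hermite_fun k t)\<^sup>2 \<le> 3/4 * (25/4) ^ k / (sqrt pi * b) * (\<bar>t\<bar> * exp (- (t\<^sup>2) / 2))"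
proof -
  have "b\<^sup>2 \<le> t\<^sup>2"
    using assms abs_le_square_iff[of b t] by auto
  have "(poly (hermite_poly k) t)\<^sup>2 \<le> ((5/2 * \<bar>t\<bar>) ^ k)\<^sup>2"
    using abs_poly_hermite_poly_le[of k t] assms \<open>b\<^sup>2 \<le> t\<^sup>2\<close>
      power_mono[of "\<bar>poly (hermite_poly k) t\<bar>" "(5/2 * \<bar>t\<bar>) ^ k" 2]
    by simp
  also have "\<dots> = ((5/2) ^ k)\<^sup>2 * (\<bar>t\<bar> ^ k)\<^sup>2"
    by (simp only: power_mult_distrib)
  also have "\<dots> = (25/4) ^ k * \<bar>t\<bar> ^ (2 * k)"
    by (simp only: power_even_eq power2_eq_square power_mult_distrib[symmetric]) simp
  finally have hermite_poly_sq: "(poly (hermite_poly k) t)\<^sup>2 \<le> (25/4) ^ k * \<bar>t\<bar> ^ (2 * k)" .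
  have "(hermite_fun k t)\<^sup>2 = (hermite_norm_const k)\<^sup>2 * (poly (hermite_poly k) t)\<^sup>2 * exp (- (t\<^sup>2))"
    using hermite_fun_mult_eq_poly[of k t k] by (simp add: power2_eq_square)
  also have "\<dots> \<le> (hermite_norm_const k)\<^sup>2 * (25/4) ^ k * (\<bar>t\<bar> ^ (2 * k) * exp (- (t\<^sup>2)))"
    using hermite_poly_sq by (simp add: mult.assoc mult_left_mono mult_right_mono)
  also have "\<dots> \<le> (hermite_norm_const k)\<^sup>2 * (25/4) ^ k * (3/4 * 2 ^ k * fact k / b * (\<bar>t\<bar> * exp (- (t\<^sup>2) / 2)))"
    using even_power_gaussian_le[OF assms] by (intro mult_left_mono) auto
  also have "\<dots> = 3/4 * (25/4) ^ k / (sqrt pi * b) * (\<bar>t\<bar> * exp (- (t\<^sup>2) / 2))"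
    by (simp add: hermite_norm_const_sq field_simps)
  finally show ?thesis .
qed

lemma hermite_fun_tail_bound:
  fixes b :: real
  assumes "1 \<le> b" "2 * real k + 1 \<le> b\<^sup>2"
  shows "integrable lborel (\<lambda>t. indicator {t. b \<le> \<bar>t\<bar>} t * (hermite_fun k t)\<^sup>2)"
    and "(\<integral>t. indicator {t. b \<le> \<bar>t\<bar>} t * (hermite_fun k t)\<^sup>2 \<partial>lborel)
           \<le> 3/2 * 8 ^ k * exp (- (b\<^sup>2) / 2) / (sqrt pi * b)"
proof -
  define K where "K = 3/4 * (25/4) ^ k / (sqrt pi * b)"
  define w where "w t = indicator {t. b \<le> \<bar>t\<bar>} t * (\<bar>t\<bar> * exp (- (t\<^sup>2) / 2))" for t :: real
  have w: "has_bochner_integral lborel w (2 * exp (- (b\<^sup>2) / 2))"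
    unfolding w_def using assms by (intro has_bochner_integral_gaussian_tail) auto
  have tail_set: "{t::real. b \<le> \<bar>t\<bar>} \<in> sets lborel"
    by measurable
  show int: "integrable lborel (\<lambda>t. indicator {t. b \<le> \<bar>t\<bar>} t * (hermite_fun k t)\<^sup>2)"
    using integrable_mult_indicator[OF tail_set integrable_hermite_fun_mult[of k k]]
    by (simp add: power2_eq_square)
  have "indicator {t. b \<le> \<bar>t\<bar>} t * (hermite_fun k t)\<^sup>2 \<le> K * w t" for t
    using hermite_fun_sq_le[OF assms(1) _ assms(2)] by (simp add: K_def w_def split: split_indicator)
  then have "(\<integral>t. indicator {t. b \<le> \<bar>t\<bar>} t * (hermite_fun k t)\<^sup>2 \<partial>lborel) \<le> (\<integral>t. K * w t \<partial>lborel)"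
    using int w by (intro integral_mono) (auto intro: integrable.intros)
  also have "\<dots> = 3/2 * (25/4) ^ k * exp (- (b\<^sup>2) / 2) / (sqrt pi * b)"
    using has_bochner_integral_integral_eq[OF w] by (simp add: K_def ac_simps)
  also have "\<dots> \<le> 3/2 * 8 ^ k * exp (- (b\<^sup>2) / 2) / (sqrt pi * b)"
    using assms by (intro divide_right_mono mult_right_mono mult_left_mono power_mono) auto
  finally show "(\<integral>t. indicator {t. b \<le> \<bar>t\<bar>} t * (hermite_fun k t)\<^sup>2 \<partial>lborel)
      \<le> 3/2 * 8 ^ k * exp (- (b\<^sup>2) / 2) / (sqrt pi * b)" .
qed

lemma integral_lborel_prod_Basis:
  fixes f :: "'a::euclidean_space \<Rightarrow> real \<Rightarrow> real"
  assumes int: "\<And>b. b \<in> Basis \<Longrightarrow> integrable lborel (f b)"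
  shows "integrable lborel (\<lambda>x::'a. \<Prod>b\<in>Basis. f b (x \<bullet> b))"
    and "(\<integral>x. (\<Prod>b\<in>Basis. f b (x \<bullet> b)) \<partial>(lborel::'a measure)) = (\<Prod>b\<in>Basis. (\<integral>x. f b x \<partial>lborel))"
proof -
  interpret P: product_sigma_finite "\<lambda>_::'a. lborel::real measure"
    by standard
  have [measurable]: "f b \<in> borel_measurable borel" if "b \<in> Basis" for b
    using int[OF that] by (simp add: borel_measurable_integrable)
  have g: "(\<lambda>y. \<Sum>b\<in>Basis. y b *\<^sub>R b) \<in> measurable (\<Pi>\<^sub>M b\<in>Basis. lborel) (borel::'a measure)"
    by measurable
  have F: "(\<lambda>x::'a. \<Prod>b\<in>Basis. f b (x \<bullet> b)) \<in> borel_measurable borel"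
    by measurable
  have coords: "(\<Prod>b'\<in>Basis. f b' ((\<Sum>b\<in>Basis. y b *\<^sub>R b) \<bullet> b')) = (\<Prod>b'\<in>Basis. f b' (y b'))" for y
    by (intro prod.cong refl) (simp add: inner_sum_left inner_Basis if_distrib sum.delta cong: if_cong)
  have "integrable (\<Pi>\<^sub>M b\<in>Basis. lborel) (\<lambda>y. \<Prod>b\<in>Basis. f b (y b))"
    by (rule P.product_integrable_prod) (auto intro: int)
  then show "integrable lborel (\<lambda>x::'a. \<Prod>b\<in>Basis. f b (x \<bullet> b))"
    by (subst lborel_eq) (subst integrable_distr_eq[OF g F], simp add: coords)
  have "(\<integral>x. (\<Prod>b\<in>Basis. f b (x \<bullet> b)) \<partial>(lborel::'a measure))
      = (\<integral>y. (\<Prod>b\<in>Basis. f b (y b)) \<partial>(\<Pi>\<^sub>M b\<in>Basis. lborel))"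
    by (subst lborel_eq) (subst integral_distr[OF g F], simp add: coords)
  also have "\<dots> = (\<Prod>b\<in>Basis. (\<integral>x. f b x \<partial>lborel))"
    by (rule P.product_integral_prod) (auto intro: int)
  finally show "(\<integral>x. (\<Prod>b\<in>Basis. f b (x \<bullet> b)) \<partial>(lborel::'a measure)) = (\<Prod>b\<in>Basis. (\<integral>x. f b x \<partial>lborel))" .
qed

lemma integral_lborel_prod_vec:
  fixes g :: "'n::finite \<Rightarrow> real \<Rightarrow> real"
  assumes int: "\<And>i. integrable lborel (g i)"
  shows "integrable lborel (\<lambda>x::real^'n. \<Prod>i\<in>UNIV. g i (x $ i))"
    and "(\<integral>x. (\<Prod>i\<in>UNIV. g i (x $ i)) \<partial>(lborel::(real^'n) measure)) = (\<Prod>i\<in>UNIV. (\<integral>x. g i x \<partial>lborel))"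
proof -
  define f where "f b = g (SOME i. b = axis i (1::real))" for b :: "real^'n"
  have f_axis: "f (axis i 1) = g i" for i
    unfolding f_def by (rule arg_cong[where f = g]) (auto simp: axis_eq_axis)
  have inj: "inj_on (\<lambda>i::'n. axis i (1::real)) UNIV"
    by (auto simp: inj_on_def axis_eq_axis)
  have Basis: "(Basis :: (real^'n) set) = (\<lambda>i. axis i 1) ` UNIV"
    by (auto simp: Basis_vec_def)
  have f_int: "\<And>b. b \<in> (Basis :: (real^'n) set) \<Longrightarrow> integrable lborel (f b)"
    unfolding Basis using int f_axis by auto
  have "(\<Prod>b\<in>Basis. f b (x \<bullet> b)) = (\<Prod>i\<in>UNIV. g i (x $ i))" for x :: "real^'n"
    unfolding Basis by (subst prod.reindex[OF inj]) (simp add: f_axis inner_axis)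
  moreover have "(\<Prod>b\<in>Basis. (\<integral>x. f b x \<partial>lborel)) = (\<Prod>i\<in>UNIV. (\<integral>x. g i x \<partial>lborel))"
    unfolding Basis by (subst prod.reindex[OF inj]) (simp add: f_axis)
  ultimately show "integrable lborel (\<lambda>x::real^'n. \<Prod>i\<in>UNIV. g i (x $ i))"
    and "(\<integral>x. (\<Prod>i\<in>UNIV. g i (x $ i)) \<partial>(lborel::(real^'n) measure)) = (\<Prod>i\<in>UNIV. (\<integral>x. g i x \<partial>lborel))"
    using integral_lborel_prod_Basis[where f = f, OF f_int] by simp_all
qed

lemma hermite_multi_orthonormal:
  fixes \<alpha> \<beta> :: "'n::finite \<Rightarrow> nat"
  shows "integrable lborel (\<lambda>x::real^'n. hermite_multi \<alpha> x * hermite_multi \<beta> x)"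
    and "(\<integral>x. hermite_multi \<alpha> x * hermite_multi \<beta> x \<partial>(lborel::(real^'n) measure)) = (if \<alpha> = \<beta> then 1 else 0)"
proof -
  have factor: "hermite_multi \<alpha> x * hermite_multi \<beta> x
      = (\<Prod>i\<in>UNIV. (\<lambda>t. hermite_fun (\<alpha> i) t * hermite_fun (\<beta> i) t) (x $ i))" for x :: "real^'n"
    unfolding hermite_multi_def by (simp add: prod.distrib)
  show "integrable lborel (\<lambda>x::real^'n. hermite_multi \<alpha> x * hermite_multi \<beta> x)"
    unfolding factor by (rule integral_lborel_prod_vec(1)) (rule integrable_hermite_fun_mult)
  have "(\<integral>x. hermite_multi \<alpha> x * hermite_multi \<beta> x \<partial>(lborel::(real^'n) measure))
      = (\<Prod>i\<in>UNIV. if \<alpha> i = \<beta> i then 1 else 0)"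
    unfolding factor integral_lborel_prod_vec(2)[OF integrable_hermite_fun_mult]
    by (simp add: integral_hermite_fun_mult)
  also have "\<dots> = (if \<alpha> = \<beta> then 1 else 0)"
    by (auto simp: prod_zero_iff)
  finally show "(\<integral>x. hermite_multi \<alpha> x * hermite_multi \<beta> x \<partial>(lborel::(real^'n) measure))
      = (if \<alpha> = \<beta> then 1 else 0)" .
qed

lemma hermite_multi_tail_bound:
  fixes \<alpha> :: "'n::finite \<Rightarrow> nat" and j :: 'n and b :: real
  assumes "1 \<le> b" "2 * real (\<alpha> j) + 1 \<le> b\<^sup>2"
  shows "integrable lborel (\<lambda>x::real^'n. indicator {x. b \<le> \<bar>x $ j\<bar>} x * (hermite_multi \<alpha> x)\<^sup>2)"
    and "(\<integral>x. indicator {x. b \<le> \<bar>x $ j\<bar>} x * (hermite_multi \<alpha> x)\<^sup>2 \<partial>(lborel::(real^'n) measure))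
          \<le> 3/2 * 8 ^ \<alpha> j * exp (- (b\<^sup>2) / 2) / (sqrt pi * b)"
proof -
  define g where "g i t = (if i = j then indicator {t. b \<le> \<bar>t\<bar>} t else 1) * (hermite_fun (\<alpha> i) t)\<^sup>2" for i t
  have g_coord: "g j = (\<lambda>t. indicator {t. b \<le> \<bar>t\<bar>} t * (hermite_fun (\<alpha> j) t)\<^sup>2)"
    by (simp add: g_def fun_eq_iff)
  have g_other: "g i = (\<lambda>t. hermite_fun (\<alpha> i) t * hermite_fun (\<alpha> i) t)" if "i \<noteq> j" for i
    using that by (simp add: g_def power2_eq_square fun_eq_iff)
  have g_int: "integrable lborel (g i)" for i
    using hermite_fun_tail_bound(1)[OF assms] g_other[of i] integrable_hermite_fun_mult[of "\<alpha> i" "\<alpha> i"]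
    by (cases "i = j") (simp_all add: g_coord)
  have factor: "indicator {x. b \<le> \<bar>x $ j\<bar>} x * (hermite_multi \<alpha> x)\<^sup>2 = (\<Prod>i\<in>UNIV. g i (x $ i))"
    for x :: "real^'n"
    by (simp add: g_def hermite_multi_def prod.distrib prod.delta prod_power_distrib indicator_def)
  show "integrable lborel (\<lambda>x::real^'n. indicator {x. b \<le> \<bar>x $ j\<bar>} x * (hermite_multi \<alpha> x)\<^sup>2)"
    unfolding factor by (rule integral_lborel_prod_vec(1)[OF g_int])
  have "(\<integral>x. indicator {x. b \<le> \<bar>x $ j\<bar>} x * (hermite_multi \<alpha> x)\<^sup>2 \<partial>(lborel::(real^'n) measure))
      = integral\<^sup>L lborel (g j) * (\<Prod>i\<in>UNIV - {j}. integral\<^sup>L lborel (g i))"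
    unfolding factor integral_lborel_prod_vec(2)[OF g_int] by (simp add: prod.remove)
  also have "(\<Prod>i\<in>UNIV - {j}. integral\<^sup>L lborel (g i)) = 1"
    by (intro prod.neutral) (simp add: g_other integral_hermite_fun_mult)
  finally show "(\<integral>x. indicator {x. b \<le> \<bar>x $ j\<bar>} x * (hermite_multi \<alpha> x)\<^sup>2 \<partial>(lborel::(real^'n) measure))
      \<le> 3/2 * 8 ^ \<alpha> j * exp (- (b\<^sup>2) / 2) / (sqrt pi * b)"
    using hermite_fun_tail_bound(2)[OF assms] by (simp add: g_coord)
qed

lemma multi_indices_le_subset_PiE: "multi_indices_le N \<subseteq> PiE UNIV (\<lambda>_::'n::finite. {..N})"
proof
  fix \<alpha> :: "'n \<Rightarrow> nat"
  assume "\<alpha> \<in> multi_indices_le N"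
  then have "\<alpha> i \<le> N" for i
    using member_le_sum[of i UNIV \<alpha>] by (simp add: multi_indices_le_def)
  then show "\<alpha> \<in> PiE UNIV (\<lambda>_. {..N})"
    by (simp add: PiE_UNIV_domain)
qed

lemma finite_multi_indices_le: "finite (multi_indices_le N :: ('n::finite \<Rightarrow> nat) set)"
  by (rule finite_subset[OF multi_indices_le_subset_PiE]) (simp add: finite_PiE)

lemma pow8_le_weight:
  fixes \<alpha> :: "'n::finite \<Rightarrow> nat"
  assumes "\<alpha> \<in> multi_indices_le N"
  shows "(8::real) ^ \<alpha> j \<le> 2 ^ N * (\<Prod>i\<in>UNIV. (if i = j then 4 else 1/2) ^ \<alpha> i)"
proof -
  define r where "r = (\<Sum>i\<in>UNIV - {j}. \<alpha> i)"
  have r: "\<alpha> j + r \<le> N"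
    using assms by (simp add: multi_indices_le_def r_def sum.remove)
  have "(\<Prod>i\<in>UNIV. (if i = j then 4 else 1/2) ^ \<alpha> i)
      = (4::real) ^ \<alpha> j * (\<Prod>i\<in>UNIV - {j}. (1/2) ^ \<alpha> i)"
    by (simp add: prod.remove[of UNIV j])
  also have "\<dots> = 4 ^ \<alpha> j * (1/2) ^ r"
    by (simp add: r_def power_sum)
  finally have weight: "(\<Prod>i\<in>UNIV. (if i = j then 4 else 1/2) ^ \<alpha> i) = (4::real) ^ \<alpha> j * (1/2) ^ r" .
  have "(8::real) ^ \<alpha> j = 4 ^ \<alpha> j * 2 ^ \<alpha> j"
    by (simp add: power_mult_distrib[symmetric])
  also have "\<dots> = 4 ^ \<alpha> j * (2 ^ (\<alpha> j + r) * (1/2) ^ r)"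
    by (simp add: power_add power_one_over)
  also have "\<dots> \<le> 4 ^ \<alpha> j * (2 ^ N * (1/2) ^ r)"
    using r by (intro mult_left_mono mult_right_mono power_increasing) auto
  finally show ?thesis
    by (simp add: weight mult_ac)
qed

text \<open>Summed over the box {..N}^n, the weights of the previous lemma factor into geometric sums.\<close>
lemma sum_multi_indices_le_pow8:
  fixes j :: "'n::finite"
  shows "(\<Sum>\<alpha>\<in>multi_indices_le N. (8::real) ^ \<alpha> j) \<le> 2/3 * 2 ^ CARD('n) * 8 ^ N"
proof -
  define w where "w i k = ((if i = j then 4 else 1/2) ^ k :: real)" for i :: 'n and k :: nat
  have w_nonneg: "0 \<le> w i k" for i k
    by (simp add: w_def)
  have geom4: "(\<Sum>k\<le>N. (4::real) ^ k) \<le> 4 ^ Suc N / 3"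
    by (induction N) simp_all
  have geom_half: "(\<Sum>k\<le>N. (1/2::real) ^ k) = 2 - (1/2) ^ N"
    by (induction N) (simp_all add: field_simps)
  have half_pow: "(1/2::real) ^ N \<le> 1"
    by (rule power_le_one) auto
  have "(\<Sum>\<alpha>\<in>multi_indices_le N. (8::real) ^ \<alpha> j)
      \<le> (\<Sum>\<alpha>\<in>multi_indices_le N. 2 ^ N * (\<Prod>i\<in>UNIV. w i (\<alpha> i)))"
    unfolding w_def by (intro sum_mono pow8_le_weight)
  also have "\<dots> \<le> (\<Sum>\<alpha>\<in>PiE UNIV (\<lambda>_. {..N}). 2 ^ N * (\<Prod>i\<in>UNIV. w i (\<alpha> i)))"
    using multi_indices_le_subset_PiE w_nonneg
    by (intro sum_mono2) (auto simp: finite_PiE intro!: mult_nonneg_nonneg prod_nonneg)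
  also have "\<dots> = 2 ^ N * (\<Prod>i\<in>UNIV. \<Sum>k\<le>N. w i k)"
    by (simp add: prod_sum_PiE sum_distrib_left)
  also have "\<dots> = 2 ^ N * ((\<Sum>k\<le>N. w j k) * (\<Prod>i\<in>UNIV - {j}. \<Sum>k\<le>N. w i k))"
    by (simp add: prod.remove)
  also have "\<dots> \<le> 2 ^ N * (4 ^ Suc N / 3 * (\<Prod>i\<in>UNIV - {j}. 2))"
  proof (intro mult_left_mono mult_mono prod_mono conjI)
    show "(\<Sum>k\<le>N. w j k) \<le> 4 ^ Suc N / 3"
      using geom4 by (simp add: w_def)
    fix i
    assume "i \<in> UNIV - {j}"
    then show "0 \<le> (\<Sum>k\<le>N. w i k)" and "(\<Sum>k\<le>N. w i k) \<le> 2"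
      using geom_half half_pow by (simp_all add: w_def)
  qed (auto intro!: sum_nonneg prod_nonneg w_nonneg)
  also have "(\<Prod>i\<in>UNIV - {j}. (2::real)) = 2 ^ (CARD('n) - 1)"
    by (simp add: card_Diff_singleton)
  also have "2 ^ N * (4 ^ Suc N / 3 * 2 ^ (CARD('n) - 1)) = 2/3 * 2 ^ CARD('n) * (8::real) ^ N"
  proof -
    have "(2::real) ^ CARD('n) = 2 * 2 ^ (CARD('n) - 1)"
      using power_Suc[of "2::real" "CARD('n) - 1"] by simp
    moreover have "(8::real) ^ N = 2 ^ N * 4 ^ N"
      by (simp add: power_mult_distrib[symmetric])
    ultimately show ?thesis
      by simp
  qed
  finally show ?thesis .
qed

lemma norm_le_sqrt_card_mult_abs_nth:
  fixes x :: "real^'n::finite"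
  obtains j where "norm x \<le> sqrt (real CARD('n)) * \<bar>x $ j\<bar>"
proof -
  have "(MAX i. \<bar>x $ i\<bar>) \<in> range (\<lambda>i. \<bar>x $ i\<bar>)"
    by (rule Max_in) auto
  then obtain j where j_max: "(MAX i. \<bar>x $ i\<bar>) = \<bar>x $ j\<bar>"
    by blast
  have j: "\<bar>x $ i\<bar> \<le> \<bar>x $ j\<bar>" for i
    by (simp flip: j_max)
  have "norm x = sqrt (\<Sum>i\<in>UNIV. (x $ i)\<^sup>2)"
    by (simp add: norm_vec_def L2_set_def)
  also have "\<dots> \<le> sqrt (\<Sum>i\<in>(UNIV::'n set). (x $ j)\<^sup>2)"
    using j abs_le_square_iff by (intro real_sqrt_le_mono sum_mono) blast
  also have "\<dots> = sqrt (real CARD('n)) * \<bar>x $ j\<bar>"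
    by (simp add: real_sqrt_mult)
  finally show ?thesis
    by (rule that)
qed

lemma indicator_norm_ge_le_sum_indicator_nth:
  fixes x :: "real^'n::finite" and b :: real
  shows "indicator {x. sqrt (real CARD('n)) * b \<le> norm x} x
    \<le> (\<Sum>j\<in>UNIV. indicator {x::real^'n. b \<le> \<bar>x $ j\<bar>} x :: real)"
proof -
  obtain j where j: "norm x \<le> sqrt (real CARD('n)) * \<bar>x $ j\<bar>"
    by (rule norm_le_sqrt_card_mult_abs_nth)
  have "b \<le> \<bar>x $ j\<bar>" if "sqrt (real CARD('n)) * b \<le> norm x"
    using order_trans[OF that j] by simp
  then have "indicator {x. sqrt (real CARD('n)) * b \<le> norm x} x \<le> (indicator {x::real^'n. b \<le> \<bar>x $ j\<bar>} x :: real)"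
    by (auto simp: indicator_def)
  also have "\<dots> \<le> (\<Sum>j\<in>UNIV. indicator {x::real^'n. b \<le> \<bar>x $ j\<bar>} x)"
    by (rule member_le_sum) auto
  finally show ?thesis .
qed

lemma cmod_sq_eq_Re_mult_cnj: "(cmod z)\<^sup>2 = Re (z * cnj z)"
  using arg_cong[OF complex_norm_square[of z], of Re] by simp

lemma cmod_sum_hermite_multi_sq:
  fixes c :: "('n::finite \<Rightarrow> nat) \<Rightarrow> complex"
  shows "(cmod (\<Sum>\<alpha>\<in>S. c \<alpha> * of_real (hermite_multi \<alpha> x)))\<^sup>2
       = (\<Sum>\<alpha>\<in>S. \<Sum>\<beta>\<in>S. Re (c \<alpha> * cnj (c \<beta>)) * (hermite_multi \<alpha> x * hermite_multi \<beta> x))"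
  by (simp add: cmod_sq_eq_Re_mult_cnj cnj_sum sum_product algebra_simps)

lemma cmod_sum_hermite_multi_sq_le:
  fixes c :: "('n::finite \<Rightarrow> nat) \<Rightarrow> complex"
  shows "(cmod (\<Sum>\<alpha>\<in>S. c \<alpha> * of_real (hermite_multi \<alpha> x)))\<^sup>2
       \<le> (\<Sum>\<alpha>\<in>S. (cmod (c \<alpha>))\<^sup>2) * (\<Sum>\<alpha>\<in>S. (hermite_multi \<alpha> x)\<^sup>2)"
proof -
  have "cmod (\<Sum>\<alpha>\<in>S. c \<alpha> * of_real (hermite_multi \<alpha> x)) \<le> (\<Sum>\<alpha>\<in>S. cmod (c \<alpha>) * \<bar>hermite_multi \<alpha> x\<bar>)"
    using norm_sum[of "\<lambda>\<alpha>. c \<alpha> * of_real (hermite_multi \<alpha> x)" S] by (simp add: norm_mult)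
  then have "(cmod (\<Sum>\<alpha>\<in>S. c \<alpha> * of_real (hermite_multi \<alpha> x)))\<^sup>2
      \<le> (\<Sum>\<alpha>\<in>S. cmod (c \<alpha>) * \<bar>hermite_multi \<alpha> x\<bar>)\<^sup>2"
    by (intro power_mono) auto
  also have "\<dots> \<le> (\<Sum>\<alpha>\<in>S. (cmod (c \<alpha>))\<^sup>2) * (\<Sum>\<alpha>\<in>S. \<bar>hermite_multi \<alpha> x\<bar>\<^sup>2)"
    by (rule Cauchy_Schwarz_ineq_sum)
  finally show ?thesis
    by simp
qed

lemma hermite_sum_L2_norm:
  fixes c :: "('n::finite \<Rightarrow> nat) \<Rightarrow> complex"
  assumes "finite S"
  shows "integrable lborel (\<lambda>x::real^'n. (cmod (\<Sum>\<alpha>\<in>S. c \<alpha> * of_real (hermite_multi \<alpha> x)))\<^sup>2)"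
    and "(\<integral>x. (cmod (\<Sum>\<alpha>\<in>S. c \<alpha> * of_real (hermite_multi \<alpha> x)))\<^sup>2 \<partial>(lborel::(real^'n) measure))
      = (\<Sum>\<alpha>\<in>S. (cmod (c \<alpha>))\<^sup>2)"
proof -
  show "integrable lborel (\<lambda>x::real^'n. (cmod (\<Sum>\<alpha>\<in>S. c \<alpha> * of_real (hermite_multi \<alpha> x)))\<^sup>2)"
    unfolding cmod_sum_hermite_multi_sq
    by (intro Bochner_Integration.integrable_sum integrable_mult_right hermite_multi_orthonormal(1))
  define r where "r \<alpha> \<beta> = Re (c \<alpha> * cnj (c \<beta>))" for \<alpha> \<beta>
  have "(\<integral>x. (cmod (\<Sum>\<alpha>\<in>S. c \<alpha> * of_real (hermite_multi \<alpha> x)))\<^sup>2 \<partial>(lborel::(real^'n) measure))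
      = (\<Sum>\<alpha>\<in>S. \<Sum>\<beta>\<in>S. r \<alpha> \<beta> * (if \<alpha> = \<beta> then 1 else 0))"
    unfolding cmod_sum_hermite_multi_sq r_def[symmetric]
    by (simp add: Bochner_Integration.integral_sum integrable_mult_right hermite_multi_orthonormal
        del: mult_cancel_left1 mult_cancel_right1)
  also have "\<dots> = (\<Sum>\<alpha>\<in>S. (cmod (c \<alpha>))\<^sup>2)"
    using assms by (simp add: if_distrib sum.delta' r_def cmod_sq_eq_Re_mult_cnj cong: if_cong)
  finally show "(\<integral>x. (cmod (\<Sum>\<alpha>\<in>S. c \<alpha> * of_real (hermite_multi \<alpha> x)))\<^sup>2 \<partial>(lborel::(real^'n) measure))
      = (\<Sum>\<alpha>\<in>S. (cmod (c \<alpha>))\<^sup>2)" .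
qed

lemma hermite_sum_tail_bound:
  fixes N :: nat and c :: "('n::finite \<Rightarrow> nat) \<Rightarrow> complex" and b :: real
  defines "f \<equiv> \<lambda>x. \<Sum>\<alpha>\<in>multi_indices_le N. c \<alpha> * of_real (hermite_multi \<alpha> x)"
  assumes "1 \<le> b" and "2 * real N + 1 \<le> b\<^sup>2"
  shows "(LINT x : {x. sqrt (real CARD('n)) * b \<le> norm x} | lborel. (cmod (f x))\<^sup>2)
    \<le> real CARD('n) * 2 ^ CARD('n) * 8 ^ N * (exp (- (b\<^sup>2) / 2) / (sqrt pi * b))
       * (\<Sum>\<alpha>\<in>multi_indices_le N. (cmod (c \<alpha>))\<^sup>2)"
proof -
  define S where "S = (multi_indices_le N :: ('n \<Rightarrow> nat) set)"
  define A where "A = {x::real^'n. sqrt (real CARD('n)) * b \<le> norm x}"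
  define C where "C = (\<Sum>\<alpha>\<in>S. (cmod (c \<alpha>))\<^sup>2)"
  define B where "B = exp (- (b\<^sup>2) / 2) / (sqrt pi * b)"
  define g where "g \<alpha> j x = indicator {x::real^'n. b \<le> \<bar>x $ j\<bar>} x * (hermite_multi \<alpha> x)\<^sup>2" for \<alpha> j x
  have C: "0 \<le> C" and B: "0 \<le> B"
    using assms by (auto simp: C_def B_def intro!: sum_nonneg)
  have g_tail: "integrable lborel (g \<alpha> j)" "integral\<^sup>L lborel (g \<alpha> j) \<le> 3/2 * 8 ^ \<alpha> j * B"
    if "\<alpha> \<in> S" for \<alpha> j
  proof -
    have "\<alpha> j \<le> N"
      using that multi_indices_le_subset_PiE[of N] by (auto simp: S_def PiE_iff)
    then have "2 * real (\<alpha> j) + 1 \<le> b\<^sup>2"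
      using assms by simp
    then show "integrable lborel (g \<alpha> j)" "integral\<^sup>L lborel (g \<alpha> j) \<le> 3/2 * 8 ^ \<alpha> j * B"
      using hermite_multi_tail_bound[OF assms(2)] unfolding g_def B_def by (simp_all add: fun_eq_iff)
  qed
  have pointwise: "indicator A x * (cmod (f x))\<^sup>2 \<le> C * (\<Sum>j\<in>UNIV. \<Sum>\<alpha>\<in>S. g \<alpha> j x)" for x
  proof -
    have "indicator A x * (cmod (f x))\<^sup>2
        \<le> (\<Sum>j\<in>UNIV. indicator {x::real^'n. b \<le> \<bar>x $ j\<bar>} x) * (C * (\<Sum>\<alpha>\<in>S. (hermite_multi \<alpha> x)\<^sup>2))"
      using indicator_norm_ge_le_sum_indicator_nth[of b x] cmod_sum_hermite_multi_sq_le[of c x S]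
      by (intro mult_mono) (auto simp: A_def f_def S_def C_def intro: sum_nonneg)
    then show ?thesis
      by (simp add: g_def sum_distrib_left sum_distrib_right mult_ac)
  qed
  have A: "A \<in> sets lborel"
    unfolding A_def by measurable
  have "(LINT x : A | lborel. (cmod (f x))\<^sup>2) \<le> (\<integral>x. C * (\<Sum>j\<in>UNIV. \<Sum>\<alpha>\<in>S. g \<alpha> j x) \<partial>lborel)"
    unfolding set_lebesgue_integral_def
    using pointwise integrable_mult_indicator[OF A hermite_sum_L2_norm(1)[OF finite_multi_indices_le]] g_tail
    by (intro integral_mono) (auto simp: f_def S_def)
  also have "\<dots> = C * (\<Sum>j\<in>UNIV. \<Sum>\<alpha>\<in>S. integral\<^sup>L lborel (g \<alpha> j))"
    using g_tail by (simp add: Bochner_Integration.integral_sum Bochner_Integration.integrable_sum)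
  also have "\<dots> \<le> C * (\<Sum>j\<in>UNIV. \<Sum>\<alpha>\<in>S. 3/2 * B * 8 ^ \<alpha> j)"
    using g_tail C by (intro mult_left_mono sum_mono) (auto simp: mult_ac)
  also have "\<dots> = C * (3/2 * B * (\<Sum>j\<in>UNIV. \<Sum>\<alpha>\<in>S. (8::real) ^ \<alpha> j))"
    by (simp add: sum_distrib_left)
  also have "\<dots> \<le> C * (3/2 * B * (\<Sum>j\<in>(UNIV::'n set). 2/3 * 2 ^ CARD('n) * 8 ^ N))"
    using sum_multi_indices_le_pow8 B C by (intro mult_left_mono sum_mono) (auto simp: S_def)
  finally show ?thesis
    by (simp add: A_def B_def C_def S_def mult_ac)
qed

theorem mainTheorem9:
  fixes f :: "real ^ 'n::finite \<Rightarrow> complex" and N :: nat and a :: real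
  assumes "f \<in> hermite_space N"
    and "a \<ge> sqrt (real CARD('n)) * sqrt (2 * real N + 1)"
  shows "(LINT x : {x. norm x \<ge> a} | lborel. (cmod (f x))\<^sup>2)
    \<le> 2 ^ CARD('n) * real CARD('n) powr (3/2) / sqrt pi
       * (exp (- (a\<^sup>2) / (2 * real CARD('n))) / a) * 8 ^ N
       * (LINT x | lborel. (cmod (f x))\<^sup>2)"
proof -
  obtain c where f: "f = (\<lambda>x. \<Sum>\<alpha>\<in>multi_indices_le N. c \<alpha> * of_real (hermite_multi \<alpha> x))"
    using assms(1) by (auto simp: hermite_space_def)
  define n where "n = real CARD('n)"
  define b where "b = a / sqrt n"
  have n: "0 < n"
    by (simp add: n_def)
  have a: "a = sqrt n * b"
    using n by (simp add: b_def)
  have "sqrt (2 * real N + 1) \<le> b"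
    using assms(2) n by (simp add: a n_def mult_le_cancel_left_pos)
  then have b: "1 \<le> b" "2 * real N + 1 \<le> b\<^sup>2"
    using order_trans[of 1 "sqrt (2 * real N + 1)" b] by (auto simp: real_sqrt_le_iff sqrt_le_D)
  have "real CARD('n) powr (3/2) = n powr (1 + 1/2)"
    by (simp add: n_def)
  also have "\<dots> = n powr 1 * n powr (1/2)"
    by (rule powr_add)
  also have "\<dots> = n * sqrt n"
    using n by (simp add: powr_half_sqrt)
  finally have "real CARD('n) powr (3/2) = n * sqrt n" .
  moreover have "exp (- (a\<^sup>2) / (2 * n)) = exp (- (b\<^sup>2) / 2)"
    using n by (simp add: a power_mult_distrib)
  ultimately show ?thesis
    using hermite_sum_tail_bound[OF b, of c] hermite_sum_L2_norm(2)[OF finite_multi_indices_le, of c] n b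
    by (simp add: f a n_def field_simps)
qed

end
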